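(* Let $(X,d_X,\mu,T)$ and $(Y,d_Y,\nu,S)$ be compact metric measure-preserving systems with $T,S$ continuous and $\mu,\nu$ of full support, and let $\lambda,\lambda'\in\mathcal J(T,S)$. Let $U:(X\times Y,\lambda)\to(X\times Y,\lambda')$ be a kernel-preserving isomorphism between $\mathcal K_\lambda$ and $\mathcal K_{\lambda'}$. Then there are $A\in\mathrm{Aut}_{\rm md}(X,d_X,\mu,T)$ and $B\in\mathrm{Aut}_{\rm md}(Y,d_Y,\nu,S)$ such that $U(x,y)=(Ax,By)$ for $\lambda$-a.e. $(x,y)$. Consequently $\lambda'=(A\times B)_\#\lambda$.
   Context: A compact metric measure-preserving system $(X,d_X,\mu,T)$: $(X,d_X)$ compact metric, $\mu$ Borel probability, $T$ Borel with $T_\#\mu=\mu$; probability spaces are standard and completed, maps and equalities modulo null sets. $\mathcal J(T,S)$ is the set of Borel probability measures on $X\times Y$ with marginals $\mu,\nu$ invariant under $T\times S$. For $\lambda\in\mathcal J(T,S)$, $\mathcal K_\lambda$ is the marked colored kernel space on $(X\times Y,\lambda)$ with marks $M_X^{a,b}(x,y)=d_X(T^ax,T^bx)$, $M_Y^{a,b}(x,y)=d_Y(S^ay,S^by)$ and kernels $K_X^{a,b}((x,y),(x',y'))=d_X(T^ax,T^bx')$, $K_Y^{a,b}((x,y),(x',y'))=d_Y(S^ay,S^by')$ for $a,b\ge0$. A kernel-preserving isomorphism between $\mathcal K_\lambda$ and $\mathcal K_{\lambda'}$ is a measure-space isomorphism $U:(X\times Y,\lambda)\to(X\times Y,\lambda')$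 with $M(z)=M(Uz)$ $\lambda$-a.e. for every mark $M$ and $K(z,z')=K(Uz,Uz')$ $\lambda\otimes\lambda$-a.e. for every kernel $K$ in the list above. $\mathrm{Aut}_{\rm md}(X,d_X,\mu,T)$ is the group of measure-space automorphisms $A$ of $(X,\mu)$ with $A\circ T=T\circ A$ modulo $\mu$ and $d_X(Ax,Ax')=d_X(x,x')$ for $\mu\otimes\mu$-a.e. $(x,x')$; similarly for $Y$. *)

theory Defs
  imports "HOL-Probability.Probability"
begin

definition mod0_iso :: "'c measure \<Rightarrow> 'c measure \<Rightarrow> ('c \<Rightarrow> 'c) \<Rightarrow> bool" where
  "mod0_iso M N U \<longleftrightarrow> (\<exists>V. U \<in> measurable M N \<and> V \<in> measurable N M
     \<and> distr M N U = N \<and> distr N M V = M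
     \<and> (AE x in M. V (U x) = x) \<and> (AE y in N. U (V y) = y))"

text \<open>Compact metric measure-preserving system on the metric type 'a (metric = dist).\<close>
definition cmmps :: "'a::metric_space measure \<Rightarrow> ('a \<Rightarrow> 'a) \<Rightarrow> bool" where
  "cmmps \<mu> T \<longleftrightarrow> compact (UNIV :: 'a set) \<and> prob_space \<mu> \<and> sets \<mu> = sets borel
     \<and> T \<in> borel_measurable borel \<and> distr \<mu> borel T = \<mu>"

definition full_support :: "'a::topological_space measure \<Rightarrow> bool" where
  "full_support \<mu> \<longleftrightarrow> (\<forall>W. open W \<and> W \<noteq> {} \<longrightarrow> emeasure \<mu> W > 0)"

definition joining :: "'a::metric_space measure \<Rightarrow> 'b::metric_space measure \<Rightarrow> ('a \<Rightarrow> 'a) \<Rightarrow> ('b \<Rightarrow> 'b)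
    \<Rightarrow> ('a \<times> 'b) measure \<Rightarrow> bool" where
  "joining \<mu> \<nu> T S L \<longleftrightarrow> prob_space L \<and> sets L = sets borel
     \<and> distr L borel fst = \<mu> \<and> distr L borel snd = \<nu>
     \<and> distr L borel (map_prod T S) = L"

text \<open>Almost-everywhere statements
  w.r.t. a measure and its completion coincide, so we phrase them with L and L \<Otimes> L.\<close>
definition kp_iso :: "('a::metric_space \<Rightarrow> 'a) \<Rightarrow> ('b::metric_space \<Rightarrow> 'b) \<Rightarrow> ('a \<times> 'b) measure
    \<Rightarrow> ('a \<times> 'b) measure \<Rightarrow> ('a \<times> 'b \<Rightarrow> 'a \<times> 'b) \<Rightarrow> bool" where
  "kp_iso T S L L' U \<longleftrightarrow> mod0_iso (completion L) (completion L') U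
   \<and> (\<forall>a b::nat. AE z in L.
        dist ((T^^a) (fst z)) ((T^^b) (fst z)) = dist ((T^^a) (fst (U z))) ((T^^b) (fst (U z))))
   \<and> (\<forall>a b::nat. AE z in L.
        dist ((S^^a) (snd z)) ((S^^b) (snd z)) = dist ((S^^a) (snd (U z))) ((S^^b) (snd (U z))))
   \<and> (\<forall>a b::nat. AE p in L \<Otimes>\<^sub>M L.
        dist ((T^^a) (fst (fst p))) ((T^^b) (fst (snd p)))
        = dist ((T^^a) (fst (U (fst p)))) ((T^^b) (fst (U (snd p)))))
   \<and> (\<forall>a b::nat. AE p in L \<Otimes>\<^sub>M L.
        dist ((S^^a) (snd (fst p))) ((S^^b) (snd (snd p)))
        = dist ((S^^a) (snd (U (fst p)))) ((S^^b) (snd (U (snd p)))))"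

definition aut_md :: "'a::metric_space measure \<Rightarrow> ('a \<Rightarrow> 'a) \<Rightarrow> ('a \<Rightarrow> 'a) \<Rightarrow> bool" where
  "aut_md \<mu> T A \<longleftrightarrow> mod0_iso (completion \<mu>) (completion \<mu>) A
     \<and> (AE x in \<mu>. A (T x) = T (A x))
     \<and> (AE p in \<mu> \<Otimes>\<^sub>M \<mu>. dist (A (fst p)) (A (snd p)) = dist (fst p) (snd p))"

end

theory Submission
  imports Defs
begin

text \<open>
  Since the marginals have full support, every \<open>\<lambda>\<close>-a.e. property is witnessed by points whose
  \<open>X\<close>-coordinates are dense. The kernel identity for \<open>a = b = 0\<close> says that \<open>z \<mapsto> fst (U z)\<close>
  preserves the distances between the points \<open>fst z\<close> for \<open>\<lambda>\<otimes>\<lambda>\<close>-a.e. pair; on a conull set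
  this is an isometry from a dense subset of \<open>X\<close>, which extends by compactness to an isometry
  \<open>A\<close> of \<open>X\<close> with \<open>fst \<circ> U = A \<circ> fst\<close> a.e. An isometry of a compact space into itself is onto.
  The kernel identity for \<open>(a, b) = (1, 0)\<close> gives \<open>d(T x, x') = d(T (A x), A x')\<close> for a dense
  set of \<open>x'\<close>, hence \<open>A (T x) = T (A x)\<close>; and \<open>A\<close> preserves \<open>\<mu>\<close> because \<open>U\<close> carries \<open>\<lambda>\<close> to
  \<open>\<lambda>'\<close>, both with marginal \<open>\<mu>\<close>. The same applies to \<open>Y\<close>.
\<close>

subsection \<open>Isometries\<close>

lemma isometry_continuous_on:
  assumes "\<And>x y. dist (A x) (A y) = dist x y"
  shows "continuous_on S A"
  unfolding continuous_on_iff using assms by metis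

lemma isometry_funpow:
  fixes A :: "'a::metric_space \<Rightarrow> 'a"
  assumes "\<And>x y. dist (A x) (A y) = dist x y"
  shows "dist ((A ^^ n) x) ((A ^^ n) y) = dist x y"
  by (induction n) (simp_all add: assms)

lemma compact_isometry_surj:
  fixes A :: "'a::metric_space \<Rightarrow> 'a"
  assumes cpt: "compact (UNIV :: 'a set)" and iso: "\<And>x y. dist (A x) (A y) = dist x y"
  shows "surj A"
proof (rule ccontr)
  assume "\<not> surj A"
  then obtain y where y: "y \<notin> range A" by auto
  define d where "d = infdist y (range A)"
  have "closed (range A)"
    using compact_continuous_image[OF isometry_continuous_on[OF iso] cpt]
    by (simp add: compact_imp_closed)
  then have "d > 0" using y by (simp add: d_def infdist_pos_not_in_closed)
  have far: "d \<le> dist y (A x)" for x by (simp add: d_def infdist_le)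
  define s where "s n = (A ^^ n) y" for n
  have separated: "d \<le> dist (s m) (s n)" if mn: "m < n" for m n
  proof -
    obtain k where "n = m + Suc k" using less_imp_Suc_add[OF mn] by auto
    then have "s n = (A ^^ m) ((A ^^ Suc k) y)" by (simp only: s_def funpow_add comp_apply)
    then show ?thesis using far[of "(A ^^ k) y"] by (simp add: s_def isometry_funpow[OF iso])
  qed
  obtain l r where r: "strict_mono r" "(s \<circ> r) \<longlonglongrightarrow> l"
    using cpt unfolding compact_def by blast
  then obtain M where "\<forall>m\<ge>M. \<forall>n\<ge>M. dist ((s \<circ> r) m) ((s \<circ> r) n) < d"
    using metric_CauchyD[OF LIMSEQ_imp_Cauchy \<open>d > 0\<close>] by blast
  then have "dist (s (r M)) (s (r (Suc M))) < d" by simp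
  moreover have "r M < r (Suc M)" using r(1) by (simp add: strict_mono_def)
  ultimately show False using separated by fastforce
qed

lemma dist_eq_by_approximants:
  fixes p :: "'z \<Rightarrow> 'a::metric_space" and q :: "'z \<Rightarrow> 'b::metric_space"
  assumes approx: "\<And>e. e > 0 \<Longrightarrow> \<exists>z\<in>Z. dist x (p z) < e"
    and a: "\<And>z. z \<in> Z \<Longrightarrow> dist a (q z) = dist x (p z)"
    and b: "\<And>z. z \<in> Z \<Longrightarrow> dist b (q z) = dist y (p z)"
  shows "dist a b = dist x y"
proof -
  have "\<bar>dist a b - dist x y\<bar> < e" if "e > 0" for e
  proof -
    obtain z where z: "z \<in> Z" "dist x (p z) < e / 2" using approx[of "e / 2"] \<open>e > 0\<close> by auto
    have "dist a b \<le> dist a (q z) + dist b (q z)" "dist x y \<le> dist x (p z) + dist y (p z)"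
      by (rule dist_triangle2)+
    moreover have "dist y (p z) \<le> dist x y + dist x (p z)" "dist b (q z) \<le> dist a b + dist a (q z)"
      by (metis dist_commute dist_triangle)+
    ultimately show ?thesis using a[OF z(1)] b[OF z(1)] z(2) unfolding abs_less_iff by linarith
  qed
  from this[of "\<bar>dist a b - dist x y\<bar>"] show ?thesis by fastforce
qed

lemma isometric_extension_from_dense:
  fixes p :: "'z \<Rightarrow> 'a::metric_space" and q :: "'z \<Rightarrow> 'b::metric_space"
  assumes cpt: "compact (UNIV :: 'b set)"
    and dense: "\<And>x e. e > 0 \<Longrightarrow> \<exists>z\<in>Z. dist x (p z) < e"
    and iso: "\<And>z z'. z \<in> Z \<Longrightarrow> z' \<in> Z \<Longrightarrow> dist (q z) (q z') = dist (p z) (p z')"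
  obtains A where "\<And>x y. dist (A x) (A y) = dist x y" and "\<And>z. z \<in> Z \<Longrightarrow> q z = A (p z)"
proof -
  have "\<exists>y. \<forall>z\<in>Z. dist y (q z) = dist x (p z)" for x
  proof -
    have "\<forall>n. \<exists>z\<in>Z. dist x (p z) < inverse (real (Suc n))" using dense by simp
    then obtain zs where zs: "\<And>n. zs n \<in> Z" "\<And>n. dist x (p (zs n)) < inverse (real (Suc n))"
      by metis
    have "dist (p (zs n)) x \<le> inverse (real (Suc n))" for n
      using zs(2)[of n] by (simp add: dist_commute)
    then have "(\<lambda>n. dist (p (zs n)) x) \<longlonglongrightarrow> 0"
      by (intro tendsto_sandwich[OF always_eventually always_eventually tendsto_const
            LIMSEQ_inverse_real_of_nat]) (simp_all del: of_nat_Suc)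
    then have px: "(\<lambda>n. p (zs n)) \<longlonglongrightarrow> x" by (rule tendsto_dist_iff[THEN iffD2])
    obtain y r where r: "strict_mono r" "((\<lambda>n. q (zs n)) \<circ> r) \<longlonglongrightarrow> y"
      using cpt unfolding compact_def by blast
    have "dist y (q z) = dist x (p z)" if "z \<in> Z" for z
    proof (rule LIMSEQ_unique)
      show "(\<lambda>n. dist (q (zs (r n))) (q z)) \<longlonglongrightarrow> dist y (q z)"
        using r(2) by (intro tendsto_dist) (auto simp: o_def)
      have "(\<lambda>n. dist (p (zs (r n))) (p z)) \<longlonglongrightarrow> dist x (p z)"
        using LIMSEQ_subseq_LIMSEQ[OF px r(1)] by (intro tendsto_dist) (auto simp: o_def)
      then show "(\<lambda>n. dist (q (zs (r n))) (q z)) \<longlonglongrightarrow> dist x (p z)"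
        using iso[OF zs(1) that] by simp
    qed
    then show ?thesis by blast
  qed
  then obtain A where A: "\<And>x z. z \<in> Z \<Longrightarrow> dist (A x) (q z) = dist x (p z)"
    by metis
  show thesis
  proof
    show "dist (A x) (A y) = dist x y" for x y
      by (rule dist_eq_by_approximants[OF dense A A])
    show "q z = A (p z)" if "z \<in> Z" for z
      using A[OF that, of "p z"] by simp
  qed
qed

subsection \<open>Full support and measure isomorphisms\<close>

lemma full_support_AE_dense:
  fixes p :: "'z \<Rightarrow> 'a::metric_space"
  assumes AE: "AE z in L. P z" and p: "p \<in> L \<rightarrow>\<^sub>M borel" and D: "distr L borel p = \<mu>"
    and fs: "full_support \<mu>" and "e > 0"
  shows "\<exists>z\<in>{z \<in> space L. P z}. dist x (p z) < e"
proof (rule ccontr)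
  assume none: "\<not> ?thesis"
  have ball: "p -` ball x e \<inter> space L \<in> sets L"
    using p by (auto intro: measurable_sets)
  have "AE z in L. p z \<notin> ball x e"
    using AE by (rule AE_mp) (use none in \<open>auto intro!: AE_I2\<close>)
  then have "emeasure L (p -` ball x e \<inter> space L) = 0"
    by (subst (asm) AE_iff_measurable[OF ball]) auto
  moreover have "emeasure \<mu> (ball x e) = emeasure L (p -` ball x e \<inter> space L)"
    using D emeasure_distr[OF p, of "ball x e"] by auto
  moreover have "emeasure \<mu> (ball x e) > 0"
    using fs \<open>e > 0\<close> unfolding full_support_def by auto
  ultimately show False by simp
qed

lemma measure_preserving_completion:
  assumes f: "f \<in> M \<rightarrow>\<^sub>M M" and D: "distr M M f = M"
  shows "f \<in> completion M \<rightarrow>\<^sub>M completion M"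
    and "distr (completion M) (completion M) f = completion M"
proof -
  have fc: "f \<in> completion M \<rightarrow>\<^sub>M M" by (rule measurable_completion[OF f])
  have Dc: "distr (completion M) M f = M" using distr_completion[OF f] D by simp
  show "f \<in> completion M \<rightarrow>\<^sub>M completion M"
    by (rule completion.measurable_completion2[OF fc]) (simp add: Dc)
  show "distr (completion M) (completion M) f = completion M"
    using completion.completion_distr_eq[OF fc] Dc by simp
qed

lemma distr_eq_through_measure_iso:
  assumes U: "U \<in> completion L \<rightarrow>\<^sub>M completion L'"
      "distr (completion L) (completion L') U = completion L'"
    and f: "f \<in> L' \<rightarrow>\<^sub>M M" and h: "h \<in> L \<rightarrow>\<^sub>M M"
    and AE: "AE z in L. h z = f (U z)"
  shows "distr L M h = distr L' M f"
proof -
  have fc: "f \<in> completion L' \<rightarrow>\<^sub>M M" by (rule measurable_completion[OF f])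
  have "distr L M h = distr (completion L) M h" by (rule distr_completion[OF h, symmetric])
  also have "\<dots> = distr (completion L) M (f \<circ> U)"
    using AE_completion[OF AE] measurable_completion[OF h] measurable_comp[OF U(1) fc]
    by (intro distr_cong_AE) auto
  also have "\<dots> = distr (distr (completion L) (completion L') U) M f"
    by (rule distr_distr[OF fc U(1), symmetric])
  also have "\<dots> = distr L' M f" by (simp only: U(2) distr_completion[OF f])
  finally show ?thesis .
qed

lemma measurable_continuous_on_sets_borel:
  assumes "sets M = sets borel" and "continuous_on UNIV f"
  shows "f \<in> M \<rightarrow>\<^sub>M borel"
  by (subst measurable_cong_sets[OF assms(1) refl])
    (rule borel_measurable_continuous_onI[OF assms(2)])

subsection \<open>Factor automorphisms from kernel identities\<close>

lemma AE_pair_dist_eq_factor_isometry: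
  fixes p :: "'z \<Rightarrow> 'a::metric_space" and q :: "'z \<Rightarrow> 'b::metric_space"
  assumes cpt: "compact (UNIV :: 'b set)" and L: "prob_space L"
    and p: "p \<in> L \<rightarrow>\<^sub>M borel" and D: "distr L borel p = \<mu>" and fs: "full_support \<mu>"
    and H: "AE w in L \<Otimes>\<^sub>M L. dist (p (fst w)) (p (snd w)) = dist (q (fst w)) (q (snd w))"
  obtains A where "\<And>x y. dist (A x) (A y) = dist x y" and "AE z in L. q z = A (p z)"
proof -
  interpret L: prob_space L by fact
  interpret pair_prob_space L L ..
  define Z where "Z = {z \<in> space L. AE z' in L. dist (p z) (p z') = dist (q z) (q z')}"
  have "AE z in L. AE z' in L. dist (p z) (p z') = dist (q z) (q z')"
    using AE_pair[OF H] by simp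
  then have AE_Z: "AE z in L. z \<in> Z"
    by (rule AE_mp) (auto simp: Z_def intro!: AE_I2)
  have dense: "\<exists>z\<in>Z. dist x (p z) < e" if "e > 0" for x e
    using full_support_AE_dense[OF AE_Z p D fs that] by auto
  have iso: "dist (q z) (q z') = dist (p z) (p z')" if "z \<in> Z" "z' \<in> Z" for z z'
  proof (rule dist_eq_by_approximants)
    have "AE w in L. dist (p z) (p w) = dist (q z) (q w) \<and> dist (p z') (p w) = dist (q z') (q w)"
      using that by (auto simp: Z_def)
    from full_support_AE_dense[OF this p D fs]
    show "\<exists>w\<in>{w \<in> space L. dist (p z) (p w) = dist (q z) (q w) \<and> dist (p z') (p w) = dist (q z') (q w)}.
        dist (p z) (p w) < e" if "e > 0" for e
      using that by blast
  qed auto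
  obtain A where iso_A: "\<And>x y. dist (A x) (A y) = dist x y" and A: "\<And>z. z \<in> Z \<Longrightarrow> q z = A (p z)"
    using isometric_extension_from_dense[OF cpt dense iso] by blast
  have "AE z in L. q z = A (p z)" using AE_Z by eventually_elim (rule A)
  with iso_A show thesis by (rule that)
qed

lemma AE_commute_from_kernel:
  fixes p :: "'z \<Rightarrow> 'a::metric_space"
  assumes L: "prob_space L" and p: "p \<in> L \<rightarrow>\<^sub>M borel" and D: "distr L borel p = \<mu>"
    and fs: "full_support \<mu>" and iso: "\<And>x y. dist (A x) (A y) = dist x y"
    and T: "continuous_on UNIV T" and q: "AE z in L. q z = A (p z)"
    and K: "AE w in L \<Otimes>\<^sub>M L. dist (T (p (fst w))) (p (snd w)) = dist (T (q (fst w))) (q (snd w))"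
  shows "AE x in \<mu>. A (T x) = T (A x)"
proof -
  interpret L: prob_space L by fact
  interpret pair_prob_space L L ..
  have "AE z in L. AE z' in L. dist (T (p z)) (p z') = dist (T (q z)) (q z')"
    using AE_pair[OF K] by simp
  then have "AE z in L. AE z' in L. dist (T (p z)) (p z') = dist (T (A (p z))) (A (p z'))"
    using q
  proof eventually_elim
    case (elim z)
    from elim(1) q show ?case by eventually_elim (simp add: elim(2))
  qed
  then have AE_comm: "AE z in L. A (T (p z)) = T (A (p z))"
  proof eventually_elim
    case (elim z)
    have "dist (A (T (p z))) (T (A (p z))) = dist (T (p z)) (T (p z))"
    proof (rule dist_eq_by_approximants[where q = "\<lambda>w. A (p w)"])
      show "\<exists>w\<in>{w \<in> space L. dist (T (p z)) (p w) = dist (T (A (p z))) (A (p w))}.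
          dist (T (p z)) (p w) < e" if "e > 0" for e
        using full_support_AE_dense[OF elim p D fs that] .
    qed (auto simp: iso)
    then show ?case by simp
  qed
  have "continuous_on UNIV (\<lambda>x. A (T x))"
    by (rule continuous_on_compose2[OF isometry_continuous_on[OF iso] T subset_UNIV])
  moreover have "continuous_on UNIV (\<lambda>x. T (A x))"
    by (rule continuous_on_compose2[OF T isometry_continuous_on[OF iso] subset_UNIV])
  ultimately have "{x \<in> space borel. A (T x) = T (A x)} \<in> sets borel"
    by (simp add: borel_closed closed_Collect_eq)
  with AE_comm show ?thesis
    unfolding D[symmetric] by (simp add: AE_distr_iff[OF p])
qed

lemma isometry_aut_md:
  fixes A :: "'a::metric_space \<Rightarrow> 'a"
  assumes cpt: "compact (UNIV :: 'a set)" and sets: "sets \<mu> = sets borel"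
    and iso: "\<And>x y. dist (A x) (A y) = dist x y" and D: "distr \<mu> borel A = \<mu>"
    and comm: "AE x in \<mu>. A (T x) = T (A x)"
  shows "aut_md \<mu> T A"
proof -
  define V where "V = inv A"
  have "surj A" by (rule compact_isometry_surj[OF cpt iso])
  moreover have "inj A" by (rule injI) (metis iso dist_eq_0_iff)
  ultimately have AV: "\<And>y. A (V y) = y" and VA: "\<And>x. V (A x) = x"
    by (simp_all add: V_def surj_f_inv_f)
  have V_iso: "dist (V x) (V y) = dist x y" for x y by (metis AV iso)
  have "A \<in> \<mu> \<rightarrow>\<^sub>M borel" "V \<in> \<mu> \<rightarrow>\<^sub>M borel"
    using measurable_continuous_on_sets_borel[OF sets isometry_continuous_on] iso V_iso by blast+
  then have A_meas: "A \<in> \<mu> \<rightarrow>\<^sub>M \<mu>" and V_meas: "V \<in> \<mu> \<rightarrow>\<^sub>M \<mu>"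
    by (simp_all add: measurable_cong_sets[OF refl sets])
  have DA: "distr \<mu> \<mu> A = \<mu>" using D by (simp add: distr_cong[OF refl sets])
  have "distr \<mu> \<mu> (V \<circ> A) = distr (distr \<mu> \<mu> A) \<mu> V"
    by (rule distr_distr[OF V_meas A_meas, symmetric])
  then have DV: "distr \<mu> \<mu> V = \<mu>" using DA by (simp add: VA comp_def)
  have "mod0_iso (completion \<mu>) (completion \<mu>) A"
    unfolding mod0_iso_def
    using measure_preserving_completion[OF A_meas DA] measure_preserving_completion[OF V_meas DV]
    by (auto intro!: exI[of _ V] AE_I2 simp: AV VA)
  then show ?thesis unfolding aut_md_def using comm by (simp add: iso)
qed

lemma kernel_preserving_factor:
  fixes p :: "'z \<Rightarrow> 'a::metric_space"
  assumes cpt: "compact (UNIV :: 'a set)" and sets: "sets \<mu> = sets borel"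
    and T: "continuous_on UNIV T" and fs: "full_support \<mu>" and L: "prob_space L"
    and p: "p \<in> L \<rightarrow>\<^sub>M borel" "p \<in> L' \<rightarrow>\<^sub>M borel"
    and D: "distr L borel p = \<mu>" "distr L' borel p = \<mu>"
    and U: "U \<in> completion L \<rightarrow>\<^sub>M completion L'"
      "distr (completion L) (completion L') U = completion L'"
    and K0: "AE w in L \<Otimes>\<^sub>M L. dist (p (fst w)) (p (snd w)) = dist (p (U (fst w))) (p (U (snd w)))"
    and K1: "AE w in L \<Otimes>\<^sub>M L.
      dist (T (p (fst w))) (p (snd w)) = dist (T (p (U (fst w)))) (p (U (snd w)))"
  obtains A where "aut_md \<mu> T A" and "\<And>x y. dist (A x) (A y) = dist x y"
    and "AE z in L. p (U z) = A (p z)"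
proof -
  obtain A where iso: "\<And>x y. dist (A x) (A y) = dist x y" and AE_A: "AE z in L. p (U z) = A (p z)"
    using AE_pair_dist_eq_factor_isometry[OF cpt L p(1) D(1) fs K0] by blast
  have A_meas: "A \<in> borel \<rightarrow>\<^sub>M borel"
    by (rule borel_measurable_continuous_onI[OF isometry_continuous_on[OF iso]])
  have "distr \<mu> borel A = distr L borel (A \<circ> p)"
    unfolding D(1)[symmetric] by (rule distr_distr[OF A_meas p(1)])
  also have "\<dots> = distr L' borel p"
    using AE_A by (intro distr_eq_through_measure_iso[OF U p(2) measurable_comp[OF p(1) A_meas]]) auto
  finally have "distr \<mu> borel A = \<mu>" using D(2) by simp
  then have "aut_md \<mu> T A"
    by (rule isometry_aut_md[OF cpt sets iso _
          AE_commute_from_kernel[OF L p(1) D(1) fs iso T AE_A K1]])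
  then show thesis using iso AE_A by (rule that)
qed

lemma joiningD:
  assumes "joining \<mu> \<nu> T S L"
  shows "prob_space L" and "sets L = sets borel"
    and "fst \<in> L \<rightarrow>\<^sub>M borel" and "snd \<in> L \<rightarrow>\<^sub>M borel"
    and "distr L borel fst = \<mu>" and "distr L borel snd = \<nu>"
  using assms measurable_continuous_on_sets_borel[OF _ continuous_on_fst[OF continuous_on_id]]
    measurable_continuous_on_sets_borel[OF _ continuous_on_snd[OF continuous_on_id]]
  by (auto simp: joining_def)

lemma kp_isoD:
  assumes "kp_iso T S L L' U"
  shows "U \<in> completion L \<rightarrow>\<^sub>M completion L'"
    and "distr (completion L) (completion L') U = completion L'"
    and "AE w in L \<Otimes>\<^sub>M L. dist ((T ^^ a) (fst (fst w))) ((T ^^ b) (fst (snd w)))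
      = dist ((T ^^ a) (fst (U (fst w)))) ((T ^^ b) (fst (U (snd w))))"
    and "AE w in L \<Otimes>\<^sub>M L. dist ((S ^^ a) (snd (fst w))) ((S ^^ b) (snd (snd w)))
      = dist ((S ^^ a) (snd (U (fst w)))) ((S ^^ b) (snd (U (snd w))))"
  using assms by (auto simp: kp_iso_def mod0_iso_def)

theorem theorem10:
  fixes \<mu> :: "'a::metric_space measure" and T :: "'a \<Rightarrow> 'a"
    and \<nu> :: "'b::metric_space measure" and S :: "'b \<Rightarrow> 'b"
    and L L' :: "('a \<times> 'b) measure" and U :: "'a \<times> 'b \<Rightarrow> 'a \<times> 'b"
  assumes "cmmps \<mu> T" and "cmmps \<nu> S"
    and "continuous_on UNIV T" and "continuous_on UNIV S"
    and "full_support \<mu>" and "full_support \<nu>"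
    and "joining \<mu> \<nu> T S L" and "joining \<mu> \<nu> T S L'"
    and "kp_iso T S L L' U"
  shows "\<exists>A B. aut_md \<mu> T A \<and> aut_md \<nu> S B
           \<and> (AE z in L. U z = (A (fst z), B (snd z)))
           \<and> L' = distr (completion L) borel (map_prod A B)"
proof -
  have X: "compact (UNIV :: 'a set)" "sets \<mu> = sets borel"
    and Y: "compact (UNIV :: 'b set)" "sets \<nu> = sets borel"
    using assms(1,2) by (simp_all add: cmmps_def)
  note L = joiningD[OF assms(7)] and L' = joiningD[OF assms(8)] and U = kp_isoD[OF assms(9)]
  obtain A where A: "aut_md \<mu> T A" "\<And>x y. dist (A x) (A y) = dist x y"
    "AE z in L. fst (U z) = A (fst z)"
    using kernel_preserving_factor[OF X assms(3,5) L(1,3) L'(3) L(5) L'(5) U(1,2)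
        U(3)[of 0 0, simplified] U(3)[of 1 0, simplified]] by blast
  obtain B where B: "aut_md \<nu> S B" "\<And>x y. dist (B x) (B y) = dist x y"
    "AE z in L. snd (U z) = B (snd z)"
    using kernel_preserving_factor[OF Y assms(4,6) L(1,4) L'(4) L(6) L'(6) U(1,2)
        U(4)[of 0 0, simplified] U(4)[of 1 0, simplified]] by blast
  have AE_U: "AE z in L. U z = (A (fst z), B (snd z))"
    using A(3) B(3) by eventually_elim (simp add: prod_eq_iff)
  have "map_prod A B \<in> L \<rightarrow>\<^sub>M borel"
    by (rule measurable_continuous_on_sets_borel[OF L(2) isometry_continuous_on])
      (simp add: dist_prod_def map_prod_def split_beta A(2) B(2))
  then have "distr (completion L) borel (map_prod A B) = distr L borel (map_prod A B)"
    by (rule distr_completion)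
  also have "\<dots> = distr L' borel (\<lambda>z. z)"
    using AE_U by (intro distr_eq_through_measure_iso[OF U(1,2) measurable_ident_sets[OF L'(2)]
        \<open>map_prod A B \<in> L \<rightarrow>\<^sub>M borel\<close>]) auto
  also have "\<dots> = L'" by (rule distr_id2[OF L'(2)[symmetric]])
  finally show ?thesis using A(1) B(1) AE_U by blast
qed

end
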